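(* Let $G=G(n_1,n_2,p)$ where $1\ll n_1=\lambda n_2$ for a constant $0<\lambda\leq 1$, and $(n_1n_2)^{-\frac12}\ll p\ll (n_1n_2)^{-\frac12+o(1)}$. Then whp $f(G)=o(pn_1n_2)$.
   Context: $G(n_1,n_2,p)$ is the binomial random bipartite graph: each edge of $K_{n_1,n_2}$ is present independently with probability $p$. $f(G)$ denotes the number of faces of $G$ when embedded on an orientable surface of minimal genus. The notation $f\ll g$ means $f/g\to0$; "whp" means with probability tending to $1$ as $n_1\to\infty$. *)

theory Defs
  imports "HOL-Analysis.Analysis"
begin

text \<open>Bipartite graphs on parts {0..<n1} (left) and {0..<n2} (right):
  a graph is an edge set E \<subseteq> {..<n1} \<times> {..<n2}; the edge (i,j) joins left vertex i
  and right vertex j.\<close>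

definition bip_edges :: "nat \<Rightarrow> nat \<Rightarrow> (nat \<times> nat) set" where
  "bip_edges n1 n2 = {..<n1} \<times> {..<n2}"

text \<open>Darts (directed edges): (e, True) points from the left end to the right end of e,
  (e, False) the other way.\<close>

definition darts :: "(nat \<times> nat) set \<Rightarrow> ((nat \<times> nat) \<times> bool) set" where
  "darts E = E \<times> UNIV"

text \<open>Tail vertex of a dart; vertices are Inl i (left) and Inr j (right).\<close>

fun dart_tail :: "(nat \<times> nat) \<times> bool \<Rightarrow> nat + nat" where
  "dart_tail ((i, j), True) = Inl i"
| "dart_tail ((i, j), False) = Inr j"

fun dart_rev :: "(nat \<times> nat) \<times> bool \<Rightarrow> (nat \<times> nat) \<times> bool" where
  "dart_rev (e, b) = (e, \<not> b)"

text \<open>Rotation system: a permutation of the darts which preserves the tail and acts as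
  a single cycle on the darts at every vertex (a cyclic order around each vertex).\<close>

definition rotation_system :: "(nat \<times> nat) set \<Rightarrow> ((nat \<times> nat) \<times> bool \<Rightarrow> (nat \<times> nat) \<times> bool) \<Rightarrow> bool" where
  "rotation_system E \<sigma> \<longleftrightarrow>
     bij_betw \<sigma> (darts E) (darts E)
   \<and> (\<forall>d \<in> darts E. dart_tail (\<sigma> d) = dart_tail d)
   \<and> (\<forall>d \<in> darts E. \<forall>d' \<in> darts E. dart_tail d = dart_tail d' \<longrightarrow> (\<exists>k. (\<sigma> ^^ k) d = d'))"

definition faces :: "(nat \<times> nat) set \<Rightarrow> ((nat \<times> nat) \<times> bool \<Rightarrow> (nat \<times> nat) \<times> bool)
    \<Rightarrow> ((nat \<times> nat) \<times> bool) set set" where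
  "faces E \<sigma> = (\<lambda>d. {((\<sigma> \<circ> dart_rev) ^^ k) d | k. True}) ` darts E"

text \<open>f(G): number of faces of a minimal-genus orientable
  embedding = maximum number of faces over all rotation systems (Euler's formula).\<close>

definition num_faces_min_genus :: "(nat \<times> nat) set \<Rightarrow> nat" where
  "num_faces_min_genus E = Max {card (faces E \<sigma>) | \<sigma>. rotation_system E \<sigma>}"

definition bip_prob :: "nat \<Rightarrow> nat \<Rightarrow> real \<Rightarrow> ((nat \<times> nat) set \<Rightarrow> bool) \<Rightarrow> real" where
  "bip_prob n1 n2 p P =
     (\<Sum>E \<in> {E. E \<subseteq> bip_edges n1 n2 \<and> P E}.
        p ^ card E * (1 - p) ^ (n1 * n2 - card E))"

end

(*
  Fix a rotation system and a cycle-length bound L, and sort its faces into three kinds.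
  If a face walks along some dart d and straight back along its reverse, the head of d has
  degree one, so there are at most as many of these faces as there are degree-one endpoints
  of edges.  Faces with more than L darts number at most 2|E|/L, because the faces
  partition the 2|E| darts.  In every other face the vertex walk never turns back, so it
  closes a cycle of length between 3 and L of the graph, and the face contains the first
  dart of that cycle.  Hence f(G) is at most the number of degree-one endpoints, plus the
  number of such cycles, plus 2|E|/L.

  In G(n1, n2, p), the expectation of this bound divided by p n1 n2 is
  (1-p)^(n2-1) + (1-p)^(n1-1) + 2/L + sum_{m=3..L} ((n1+n2)p)^m / (p n1 n2).
  Since p n1 tends to infinity, the first two terms vanish.  The m-th summand is of order
  q^(m-1) / sqrt(n1 n2), where q = p sqrt(n1 n2) grows more slowly than any power of n1 n2,
  so these summands vanish as well.  Let L grow slowly enough and apply Markov's inequality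
  at threshold p n1 n2 times the square root of the bound.
*)

theory Submission
  imports Defs "HOL-Combinatorics.Orbits" "HOL-Combinatorics.Cycles"
begin

section \<open>The random bipartite graph\<close>

definition bip_weight :: "nat \<Rightarrow> nat \<Rightarrow> real \<Rightarrow> (nat \<times> nat) set \<Rightarrow> real" where
  "bip_weight n1 n2 p E = p ^ card E * (1 - p) ^ (n1 * n2 - card E)"

definition bip_expect :: "nat \<Rightarrow> nat \<Rightarrow> real \<Rightarrow> ((nat \<times> nat) set \<Rightarrow> real) \<Rightarrow> real" where
  "bip_expect n1 n2 p X = (\<Sum>E\<in>Pow (bip_edges n1 n2). bip_weight n1 n2 p E * X E)"

lemma finite_bip_edges [simp]: "finite (bip_edges n1 n2)"
  by (simp add: bip_edges_def)

lemma card_bip_edges: "card (bip_edges n1 n2) = n1 * n2"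
  by (simp add: bip_edges_def card_cartesian_product)

lemma bip_expect_pattern:
  assumes S: "S \<subseteq> bip_edges n1 n2" and T: "T \<subseteq> bip_edges n1 n2" and ST: "S \<inter> T = {}"
  shows "bip_expect n1 n2 p (\<lambda>E. if S \<subseteq> E \<and> E \<inter> T = {} then 1 else 0)
           = p ^ card S * (1 - p) ^ card T"
proof -
  let ?B = "bip_edges n1 n2"
  (* Expanding the product of f e + g e over all edges gives one summand per edge set. *)
  define f where "f e = (if e \<in> T then 0 else p)" for e
  define g where "g e = (if e \<in> S then 0 else 1 - p)" for e
  have summand: "(\<Prod>e\<in>E. f e) * (\<Prod>e\<in>?B - E. g e)
      = bip_weight n1 n2 p E * (if S \<subseteq> E \<and> E \<inter> T = {} then 1 else 0)" if "E \<subseteq> ?B" for E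
  proof (cases "S \<subseteq> E \<and> E \<inter> T = {}")
    case True
    have "finite E" using finite_subset[OF that] by simp
    have "(\<Prod>e\<in>E. f e) = (\<Prod>e\<in>E. p)"
      using True by (intro prod.cong) (auto simp: f_def)
    moreover have "(\<Prod>e\<in>?B - E. g e) = (\<Prod>e\<in>?B - E. 1 - p)"
      using True by (intro prod.cong) (auto simp: g_def)
    moreover have "card (?B - E) = n1 * n2 - card E"
      using that \<open>finite E\<close> by (simp add: card_Diff_subset card_bip_edges)
    ultimately show ?thesis
      using True by (simp only: prod_constant bip_weight_def) simp
  next
    case False
    then consider e where "e \<in> S" "e \<notin> E" | e where "e \<in> E" "e \<in> T" by blast
    then have "(\<Prod>e\<in>E. f e) = 0 \<or> (\<Prod>e\<in>?B - E. g e) = 0"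
    proof cases
      case 1
      then show ?thesis using S by (intro disjI2 prod_zero) (auto simp: g_def)
    next
      case 2
      then show ?thesis
        using finite_subset[OF that finite_bip_edges] by (intro disjI1 prod_zero) (auto simp: f_def)
    qed
    then show ?thesis using False by auto
  qed
  have "(\<Prod>e\<in>?B. f e + g e) = (\<Prod>e\<in>S \<union> T. f e + g e)"
    using S T by (intro prod.mono_neutral_right) (auto simp: f_def g_def)
  also have "\<dots> = (\<Prod>e\<in>S. f e + g e) * (\<Prod>e\<in>T. f e + g e)"
    using finite_subset[OF S] finite_subset[OF T] ST by (simp add: prod.union_disjoint)
  also have "(\<Prod>e\<in>S. f e + g e) = (\<Prod>e\<in>S. p)"
    using ST by (intro prod.cong) (auto simp: f_def g_def)
  also have "(\<Prod>e\<in>T. f e + g e) = (\<Prod>e\<in>T. 1 - p)"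
    using ST by (intro prod.cong) (auto simp: f_def g_def)
  finally have "p ^ card S * (1 - p) ^ card T = (\<Sum>E\<in>Pow ?B. (\<Prod>e\<in>E. f e) * (\<Prod>e\<in>?B - E. g e))"
    by (simp add: prod_add)
  also have "\<dots> = bip_expect n1 n2 p (\<lambda>E. if S \<subseteq> E \<and> E \<inter> T = {} then 1 else 0)"
    unfolding bip_expect_def using summand by (intro sum.cong) auto
  finally show ?thesis ..
qed

lemma bip_expect_const: "bip_expect n1 n2 p (\<lambda>E. c) = c"
  using bip_expect_pattern[of "{}" n1 n2 "{}" p]
  by (simp add: bip_expect_def sum_distrib_right[symmetric])

lemma bip_expect_add:
  "bip_expect n1 n2 p (\<lambda>E. X E + Y E) = bip_expect n1 n2 p X + bip_expect n1 n2 p Y"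
  by (simp add: bip_expect_def distrib_left sum.distrib)

lemma bip_expect_cmult: "bip_expect n1 n2 p (\<lambda>E. c * X E) = c * bip_expect n1 n2 p X"
  by (simp add: bip_expect_def sum_distrib_left mult_ac)

lemma bip_expect_cong:
  "(\<And>E. E \<subseteq> bip_edges n1 n2 \<Longrightarrow> X E = Y E) \<Longrightarrow> bip_expect n1 n2 p X = bip_expect n1 n2 p Y"
  unfolding bip_expect_def by (intro sum.cong) auto

lemma bip_expect_mono:
  assumes "0 \<le> p" "p \<le> 1" "\<And>E. E \<subseteq> bip_edges n1 n2 \<Longrightarrow> X E \<le> Y E"
  shows "bip_expect n1 n2 p X \<le> bip_expect n1 n2 p Y"
  unfolding bip_expect_def using assms
  by (intro sum_mono mult_left_mono) (auto simp: bip_weight_def)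

lemma bip_expect_count_patterns:
  assumes "finite C"
    and "\<And>c. c \<in> C \<Longrightarrow> S c \<subseteq> bip_edges n1 n2 \<and> T c \<subseteq> bip_edges n1 n2 \<and> S c \<inter> T c = {}"
  shows "bip_expect n1 n2 p (\<lambda>E. real (card {c \<in> C. S c \<subseteq> E \<and> E \<inter> T c = {}}))
       = (\<Sum>c\<in>C. p ^ card (S c) * (1 - p) ^ card (T c))"
proof -
  have "bip_expect n1 n2 p (\<lambda>E. real (card {c \<in> C. S c \<subseteq> E \<and> E \<inter> T c = {}}))
      = bip_expect n1 n2 p (\<lambda>E. \<Sum>c\<in>C. if S c \<subseteq> E \<and> E \<inter> T c = {} then 1 else 0)"
    using assms(1) by (simp add: sum.If_cases Int_def)
  also have "\<dots> = (\<Sum>c\<in>C. bip_expect n1 n2 p (\<lambda>E. if S c \<subseteq> E \<and> E \<inter> T c = {} then 1 else 0))"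
    unfolding bip_expect_def by (simp add: sum_distrib_left sum.swap[of _ C])
  also have "\<dots> = (\<Sum>c\<in>C. p ^ card (S c) * (1 - p) ^ card (T c))"
    using assms(2) by (intro sum.cong refl bip_expect_pattern) auto
  finally show ?thesis .
qed

lemma bip_prob_eq_expect: "bip_prob n1 n2 p P = bip_expect n1 n2 p (\<lambda>E. if P E then 1 else 0)"
proof -
  have "bip_prob n1 n2 p P = (\<Sum>E\<in>{E \<in> Pow (bip_edges n1 n2). P E}. bip_weight n1 n2 p E)"
    unfolding bip_prob_def bip_weight_def by (rule sum.cong) auto
  also have "\<dots> = (\<Sum>E\<in>Pow (bip_edges n1 n2). if P E then bip_weight n1 n2 p E else 0)"
    by (rule sum.inter_filter) simp
  also have "\<dots> = bip_expect n1 n2 p (\<lambda>E. if P E then 1 else 0)"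
    unfolding bip_expect_def by (intro sum.cong) auto
  finally show ?thesis .
qed

lemma bip_prob_compl: "bip_prob n1 n2 p P = 1 - bip_prob n1 n2 p (\<lambda>E. \<not> P E)"
proof -
  have "bip_prob n1 n2 p P + bip_prob n1 n2 p (\<lambda>E. \<not> P E) = bip_expect n1 n2 p (\<lambda>E. 1)"
    unfolding bip_prob_eq_expect bip_expect_add[symmetric] by (intro bip_expect_cong) auto
  then show ?thesis by (simp add: bip_expect_const)
qed

lemma bip_prob_mono:
  assumes "0 \<le> p" "p \<le> 1" "\<And>E. E \<subseteq> bip_edges n1 n2 \<Longrightarrow> P E \<Longrightarrow> Q E"
  shows "bip_prob n1 n2 p P \<le> bip_prob n1 n2 p Q"
  unfolding bip_prob_eq_expect using assms by (intro bip_expect_mono) auto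

lemma bip_prob_le_1:
  assumes "0 \<le> p" "p \<le> 1" shows "bip_prob n1 n2 p P \<le> 1"
proof -
  have "bip_prob n1 n2 p P \<le> bip_prob n1 n2 p (\<lambda>_. True)"
    using assms by (rule bip_prob_mono) auto
  also have "\<dots> = 1"
    by (simp add: bip_prob_eq_expect bip_expect_const)
  finally show ?thesis .
qed

lemma bip_prob_markov:
  assumes "0 \<le> p" "p \<le> 1" "\<And>E. 0 \<le> X E" "0 < h"
  shows "bip_prob n1 n2 p (\<lambda>E. h \<le> X E) \<le> bip_expect n1 n2 p X / h"
proof -
  have "h * bip_prob n1 n2 p (\<lambda>E. h \<le> X E)
      = bip_expect n1 n2 p (\<lambda>E. h * (if h \<le> X E then 1 else 0))"
    by (simp add: bip_prob_eq_expect bip_expect_cmult)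
  also have "\<dots> \<le> bip_expect n1 n2 p X"
    using assms by (intro bip_expect_mono) auto
  finally show ?thesis using assms(4) by (simp add: pos_le_divide_eq mult.commute)
qed

lemma card_disjoint_family_le_card_hitting_set:
  assumes "\<And>F G. F \<in> C \<Longrightarrow> G \<in> C \<Longrightarrow> F \<noteq> G \<Longrightarrow> F \<inter> G = {}"
    and "\<And>F. F \<in> C \<Longrightarrow> F \<inter> A \<noteq> {}" and "finite A"
  shows "card C \<le> card A"
proof -
  define h where "h F = (SOME x. x \<in> F \<inter> A)" for F
  have h: "h F \<in> F \<inter> A" if "F \<in> C" for F
    unfolding h_def using assms(2)[OF that] by (metis some_in_eq)
  have "inj_on h C"
  proof (rule inj_onI)
    fix F G assume "F \<in> C" "G \<in> C" "h F = h G"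
    then have "F \<inter> G \<noteq> {}" using h by (metis IntD1 disjoint_iff)
    then show "F = G" using assms(1) \<open>F \<in> C\<close> \<open>G \<in> C\<close> by blast
  qed
  moreover have "h ` C \<subseteq> A" using h by auto
  ultimately show ?thesis using card_inj_on_le assms(3) by blast
qed

lemma card_disjoint_family_mult_le:
  assumes "finite D" "\<And>F. F \<in> C \<Longrightarrow> F \<subseteq> D \<and> L \<le> card F"
    and "\<And>F G. F \<in> C \<Longrightarrow> G \<in> C \<Longrightarrow> F \<noteq> G \<Longrightarrow> F \<inter> G = {}"
  shows "card C * L \<le> card D"
proof -
  have "card C * L = (\<Sum>F\<in>C. L)" by simp
  also have "\<dots> \<le> (\<Sum>F\<in>C. card F)" using assms(2) by (intro sum_mono) auto
  also have "\<dots> = card (\<Union>C)"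
  proof (rule card_Union_disjoint[symmetric])
    show "pairwise disjnt C" using assms(3) by (auto simp: pairwise_def disjnt_def)
    show "finite F" if "F \<in> C" for F using assms(2)[OF that] assms(1) finite_subset by auto
  qed
  also have "\<dots> \<le> card D" using assms(1,2) by (intro card_mono) auto
  finally show ?thesis .
qed

lemma self_in_orbit_eq:
  assumes "s \<in> orbit f s" "t \<in> orbit f s"
  shows "orbit f t = orbit f s"
proof
  show "orbit f t \<subseteq> orbit f s"
    using orbit_trans[OF _ assms(2)] by blast
  show "orbit f s \<subseteq> orbit f t"
    using orbit_trans[OF _ orbit_swap[OF assms]] by blast
qed

lemma self_in_orbits_disjoint:
  assumes "s \<in> orbit f s" "t \<in> orbit f t" "orbit f s \<noteq> orbit f t"
  shows "orbit f s \<inter> orbit f t = {}"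
proof (rule ccontr)
  assume "orbit f s \<inter> orbit f t \<noteq> {}"
  then obtain x where x: "x \<in> orbit f s" "x \<in> orbit f t" by blast
  have "orbit f s = orbit f x" using self_in_orbit_eq[OF assms(1) x(1)] ..
  also have "\<dots> = orbit f t" using self_in_orbit_eq[OF assms(2) x(2)] .
  finally show False using assms(3) by contradiction
qed

lemma cycle_of_list_funpow_reaches:
  assumes "distinct cs" "x \<in> set cs" "y \<in> set cs"
  shows "\<exists>k. (cycle_of_list cs ^^ k) x = y"
proof -
  obtain i j where ij: "i < length cs" "j < length cs" "x = cs ! i" "y = cs ! j"
    using assms(2,3) by (auto simp: in_set_conv_nth)
  define k where "k = length cs - i + j"
  have "(cycle_of_list cs ^^ k) x = rotate k cs ! i"
    using cyclic_rotation[OF assms(1), of k] ij by (metis nth_map)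
  also have "\<dots> = cs ! ((k + i) mod length cs)" using ij by (simp add: nth_rotate)
  also have "\<dots> = y" using ij by (simp add: k_def)
  finally show ?thesis ..
qed

lemma simple_cycle_in_sequence:
  fixes v :: "nat \<Rightarrow> 'a"
  assumes "0 < n" "v i0 = v (i0 + n)"
    and no_loop: "\<And>k. v (Suc k) \<noteq> v k" and no_backtrack: "\<And>k. v (Suc (Suc k)) \<noteq> v k"
  obtains i m where "3 \<le> m" "v (i + m) = v i" "inj_on (\<lambda>t. v (i + t)) {..<m}"
proof -
  define P where "P g \<longleftrightarrow> 0 < g \<and> (\<exists>i. v i = v (i + g))" for g
  define m where "m = (LEAST g. P g)"
  have "P n" using assms(1,2) by (auto simp: P_def)
  then have "P m" unfolding m_def by (rule LeastI)
  then obtain i where i: "v i = v (i + m)" "0 < m" by (auto simp: P_def)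
  have "m \<noteq> 1" "m \<noteq> 2"
    using i(1) no_loop[of i] no_backtrack[of i] by (auto simp: numeral_2_eq_2)
  with i(2) have "3 \<le> m" by linarith
  moreover have "inj_on (\<lambda>t. v (i + t)) {..<m}"
  proof (rule linorder_inj_onI')
    fix a b assume "a \<in> {..<m}" "b \<in> {..<m}" "a < b"
    show "v (i + a) \<noteq> v (i + b)"
    proof
      assume "v (i + a) = v (i + b)"
      then have "P (b - a)" using \<open>a < b\<close> unfolding P_def by (auto intro!: exI[of _ "i + a"])
      then have "m \<le> b - a" unfolding m_def by (rule Least_le)
      then show False using \<open>a < b\<close> \<open>b \<in> {..<m}\<close> by auto
    qed
  qed
  ultimately show ?thesis using that[of m i] i(1) by simp
qed

section \<open>Darts, cycles and pendant edges\<close>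

definition dart_head :: "(nat \<times> nat) \<times> bool \<Rightarrow> nat + nat" where
  "dart_head d = dart_tail (dart_rev d)"

definition bip_vertices :: "nat \<Rightarrow> nat \<Rightarrow> (nat + nat) set" where
  "bip_vertices n1 n2 = Inl ` {..<n1} \<union> Inr ` {..<n2}"

definition opposite_sides :: "nat + nat \<Rightarrow> nat + nat \<Rightarrow> bool" where
  "opposite_sides x y \<longleftrightarrow> isl x \<noteq> isl y"

definition edge_between :: "nat + nat \<Rightarrow> nat + nat \<Rightarrow> nat \<times> nat" where
  "edge_between x y = (case x of Inl i \<Rightarrow> (i, projr y) | Inr j \<Rightarrow> (projl y, j))"

definition dart_between :: "nat + nat \<Rightarrow> nat + nat \<Rightarrow> (nat \<times> nat) \<times> bool" where
  "dart_between x y = (edge_between x y, isl x)"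

lemma dart_rev_dart_rev [simp]: "dart_rev (dart_rev d) = d"
  by (cases d) simp

lemma dart_head_dart_rev [simp]: "dart_head (dart_rev d) = dart_tail d"
  by (simp add: dart_head_def)

lemma dart_eqI: "dart_tail d = dart_tail d' \<Longrightarrow> dart_head d = dart_head d' \<Longrightarrow> d = d'"
  by (cases d; cases d'; cases "snd d"; cases "snd d'") (auto simp: dart_head_def)

lemma opposite_sides_tail_head: "opposite_sides (dart_tail d) (dart_head d)"
  by (cases d; cases "snd d") (auto simp: dart_head_def opposite_sides_def)

lemma edge_between_tail_head: "edge_between (dart_tail d) (dart_head d) = fst d"
  by (cases d; cases "snd d") (auto simp: dart_head_def edge_between_def)

lemma dart_between_tail_head: "dart_between (dart_tail d) (dart_head d) = d"
  by (cases d; cases "snd d") (auto simp: dart_head_def edge_between_def dart_between_def)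

lemma edge_between_in_bip_edges:
  "opposite_sides x y \<Longrightarrow> x \<in> bip_vertices n1 n2 \<Longrightarrow> y \<in> bip_vertices n1 n2
    \<Longrightarrow> edge_between x y \<in> bip_edges n1 n2"
  by (auto simp: opposite_sides_def edge_between_def bip_vertices_def bip_edges_def)

lemma edge_between_eq_iff:
  "opposite_sides x y \<Longrightarrow> opposite_sides x' y' \<Longrightarrow>
    edge_between x y = edge_between x' y' \<longleftrightarrow> (x = x' \<and> y = y') \<or> (x = y' \<and> y = x')"
  by (cases x; cases y; cases x'; cases y') (auto simp: opposite_sides_def edge_between_def)

lemma dart_tail_in_bip_vertices: "fst d \<in> bip_edges n1 n2 \<Longrightarrow> dart_tail d \<in> bip_vertices n1 n2"
  by (cases d; cases "snd d") (auto simp: bip_vertices_def bip_edges_def)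

lemma finite_bip_vertices: "finite (bip_vertices n1 n2)"
  by (simp add: bip_vertices_def)

lemma card_bip_vertices: "card (bip_vertices n1 n2) = n1 + n2"
  unfolding bip_vertices_def by (subst card_Un_disjoint) (auto simp: card_image)

lemma dart_rev_in_darts: "d \<in> darts E \<Longrightarrow> dart_rev d \<in> darts E"
  by (cases d) (simp add: darts_def)

lemma finite_darts: "finite E \<Longrightarrow> finite (darts E)"
  by (simp add: darts_def)

lemma card_darts: "finite E \<Longrightarrow> card (darts E) = 2 * card E"
  by (simp add: darts_def card_cartesian_product)

definition cycle_edges :: "(nat + nat) list \<Rightarrow> (nat \<times> nat) set" where
  "cycle_edges u = {edge_between (u ! t) (u ! ((t + 1) mod length u)) | t. t < length u}"

text \<open>A cycle of length m of the graph appears here 2m times (choice of start and direction);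
  the overcount only weakens the upper bound.\<close>

definition bip_cycle_seqs :: "nat \<Rightarrow> nat \<Rightarrow> nat \<Rightarrow> (nat + nat) list set" where
  "bip_cycle_seqs n1 n2 L = {u. 3 \<le> length u \<and> length u \<le> L \<and> distinct u
     \<and> set u \<subseteq> bip_vertices n1 n2
     \<and> (\<forall>t < length u. opposite_sides (u ! t) (u ! ((t + 1) mod length u)))}"

definition num_cycle_seqs :: "nat \<Rightarrow> nat \<Rightarrow> nat \<Rightarrow> (nat \<times> nat) set \<Rightarrow> nat" where
  "num_cycle_seqs n1 n2 L E = card {u \<in> bip_cycle_seqs n1 n2 L. cycle_edges u \<subseteq> E}"

definition pendant_left :: "(nat \<times> nat) set \<Rightarrow> (nat \<times> nat) set" where
  "pendant_left E = {e \<in> E. \<forall>j. (fst e, j) \<in> E \<longrightarrow> j = snd e}"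

definition pendant_right :: "(nat \<times> nat) set \<Rightarrow> (nat \<times> nat) set" where
  "pendant_right E = {e \<in> E. \<forall>i. (i, snd e) \<in> E \<longrightarrow> i = fst e}"

lemma finite_bip_cycle_seqs: "finite (bip_cycle_seqs n1 n2 L)"
proof -
  have "bip_cycle_seqs n1 n2 L \<subseteq> {u. set u \<subseteq> bip_vertices n1 n2 \<and> length u \<le> L}"
    unfolding bip_cycle_seqs_def by auto
  then show ?thesis
    using finite_lists_length_le[OF finite_bip_vertices] by (rule finite_subset)
qed

definition cycle_first_darts :: "nat \<Rightarrow> nat \<Rightarrow> nat \<Rightarrow> (nat \<times> nat) set \<Rightarrow> ((nat \<times> nat) \<times> bool) set" where
  "cycle_first_darts n1 n2 L E =
     (\<lambda>u. dart_between (u ! 0) (u ! 1)) ` {u \<in> bip_cycle_seqs n1 n2 L. cycle_edges u \<subseteq> E}"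

lemma card_cycle_first_darts_le: "card (cycle_first_darts n1 n2 L E) \<le> num_cycle_seqs n1 n2 L E"
  unfolding cycle_first_darts_def num_cycle_seqs_def
  by (rule card_image_le) (simp add: finite_bip_cycle_seqs)

definition faces_upper_bound :: "nat \<Rightarrow> nat \<Rightarrow> nat \<Rightarrow> (nat \<times> nat) set \<Rightarrow> real" where
  "faces_upper_bound n1 n2 L E = real (card (pendant_left E)) + real (card (pendant_right E))
     + real (num_cycle_seqs n1 n2 L E) + 2 * real (card E) / real L"

section \<open>Counting the faces of a rotation system\<close>

locale bip_rotation =
  fixes n1 n2 :: nat and E :: "(nat \<times> nat) set"
    and \<sigma> :: "(nat \<times> nat) \<times> bool \<Rightarrow> (nat \<times> nat) \<times> bool"
  assumes edges_subset: "E \<subseteq> bip_edges n1 n2" and rotation: "rotation_system E \<sigma>"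
begin

abbreviation \<phi> :: "(nat \<times> nat) \<times> bool \<Rightarrow> (nat \<times> nat) \<times> bool" where
  "\<phi> \<equiv> \<sigma> \<circ> dart_rev"

lemma finite_edges: "finite E"
  using edges_subset by (rule finite_subset) simp

lemma bij_\<sigma>: "bij_betw \<sigma> (darts E) (darts E)"
  using rotation unfolding rotation_system_def by blast

lemma dart_tail_\<sigma>: "d \<in> darts E \<Longrightarrow> dart_tail (\<sigma> d) = dart_tail d"
  using rotation unfolding rotation_system_def by blast

lemma \<sigma>_fixpoint_unique:
  assumes "d \<in> darts E" "\<sigma> d = d" "d' \<in> darts E" "dart_tail d' = dart_tail d"
  shows "d' = d"
proof -
  obtain k where "(\<sigma> ^^ k) d = d'"
    using rotation assms(1,3,4) unfolding rotation_system_def by metis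
  moreover have "(\<sigma> ^^ k) d = d" using assms(2) by (induction k) auto
  ultimately show ?thesis by simp
qed

lemma bij_\<phi>: "bij_betw \<phi> (darts E) (darts E)"
proof -
  have "bij_betw dart_rev (darts E) (darts E)"
    by (rule bij_betw_byWitness[where f' = dart_rev]) (auto simp: darts_def)
  then show ?thesis using bij_\<sigma> by (rule bij_betw_trans)
qed

lemma dart_tail_\<phi>: "d \<in> darts E \<Longrightarrow> dart_tail (\<phi> d) = dart_head d"
  by (simp add: dart_tail_\<sigma> dart_rev_in_darts dart_head_def)

lemma funpow_\<phi>_in_darts: "d \<in> darts E \<Longrightarrow> (\<phi> ^^ k) d \<in> darts E"
  using bij_betw_apply[OF bij_betw_funpow[OF bij_\<phi>]] .

lemma self_in_orbit_\<phi>: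
  assumes "d \<in> darts E" shows "d \<in> orbit \<phi> d"
proof -
  (* The face map permutes only the darts; extended by the identity it is a permutation. *)
  define \<pi> where "\<pi> x = (if x \<in> darts E then \<phi> x else x)" for x
  have "\<pi> permutes darts E"
    using bij_\<phi> by (intro bij_imp_permutes) (auto simp: \<pi>_def cong: bij_betw_cong)
  then have "d \<in> orbit \<pi> d"
    using finite_darts[OF finite_edges]
    by (intro permutation_self_in_orbit permutes_imp_permutation)
  moreover have "orbit \<pi> d = orbit \<phi> d"
    using assms bij_betw_apply[OF bij_\<phi>] by (intro orbit_cong0[of _ "darts E"]) (auto simp: \<pi>_def)
  ultimately show ?thesis by simp
qed

lemma faces_eq_orbits: "faces E \<sigma> = orbit \<phi> ` darts E"
  unfolding faces_def by (intro image_cong refl orbit_altdef_self_in[symmetric] self_in_orbit_\<phi>)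

lemma face_subset_darts: "F \<in> faces E \<sigma> \<Longrightarrow> F \<subseteq> darts E"
  unfolding faces_def using funpow_\<phi>_in_darts by blast

lemma faces_disjoint:
  assumes "F \<in> faces E \<sigma>" "G \<in> faces E \<sigma>" "F \<noteq> G" shows "F \<inter> G = {}"
proof -
  obtain a b where "a \<in> darts E" "b \<in> darts E" "F = orbit \<phi> a" "G = orbit \<phi> b"
    using assms(1,2) unfolding faces_eq_orbits by blast
  then show ?thesis
    using self_in_orbits_disjoint[OF self_in_orbit_\<phi> self_in_orbit_\<phi>] assms(3) by simp
qed

lemma fst_in_edges: "d \<in> darts E \<Longrightarrow> fst d \<in> E"
  by (auto simp: darts_def)

lemma dart_tail_in_vertices: "d \<in> darts E \<Longrightarrow> dart_tail d \<in> bip_vertices n1 n2"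
  using fst_in_edges edges_subset by (blast intro: dart_tail_in_bip_vertices)

definition backtracks :: "((nat \<times> nat) \<times> bool) set" where
  "backtracks = {d \<in> darts E. \<phi> d = dart_rev d}"

lemma backtracks_subset:
  "backtracks \<subseteq> pendant_left E \<times> {False} \<union> pendant_right E \<times> {True}"
proof
  fix d assume "d \<in> backtracks"
  obtain i j b where d: "d = ((i, j), b)" by (metis prod.collapse)
  have ij: "(i, j) \<in> E" and fixed: "\<sigma> ((i, j), \<not> b) = ((i, j), \<not> b)"
    using \<open>d \<in> backtracks\<close> by (auto simp: backtracks_def darts_def d)
  show "d \<in> pendant_left E \<times> {False} \<union> pendant_right E \<times> {True}"
  proof (cases b)
    case True
    have "i' = i" if "(i', j) \<in> E" for i'
      using \<sigma>_fixpoint_unique[of "((i, j), False)" "((i', j), False)"] that ij fixed True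
      by (simp add: darts_def)
    then have "(i, j) \<in> pendant_right E"
      using ij unfolding pendant_right_def mem_Collect_eq fst_conv snd_conv by blast
    then show ?thesis using True d by simp
  next
    case False
    have "j' = j" if "(i, j') \<in> E" for j'
      using \<sigma>_fixpoint_unique[of "((i, j), True)" "((i, j'), True)"] that ij fixed False
      by (simp add: darts_def)
    then have "(i, j) \<in> pendant_left E"
      using ij unfolding pendant_left_def mem_Collect_eq fst_conv snd_conv by blast
    then show ?thesis using False d by simp
  qed
qed

lemma card_backtracks_le: "card backtracks \<le> card (pendant_left E) + card (pendant_right E)"
proof -
  have "finite (pendant_left E)" "finite (pendant_right E)"
    using finite_edges by (auto simp: pendant_left_def pendant_right_def)
  then have "card backtracks \<le> card (pendant_left E \<times> {False} \<union> pendant_right E \<times> {True})"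
    using backtracks_subset by (intro card_mono) auto
  also have "\<dots> \<le> card (pendant_left E) + card (pendant_right E)"
    by (rule order_trans[OF card_Un_le]) (simp add: card_cartesian_product)
  finally show ?thesis .
qed

definition face_walk :: "(nat \<times> nat) \<times> bool \<Rightarrow> nat \<Rightarrow> nat + nat" where
  "face_walk d k = dart_tail ((\<phi> ^^ k) d)"

lemma face_walk_Suc: "d \<in> darts E \<Longrightarrow> face_walk d (Suc k) = dart_head ((\<phi> ^^ k) d)"
  using dart_tail_\<phi>[OF funpow_\<phi>_in_darts] by (simp add: face_walk_def)

lemma face_walk_no_backtrack:
  assumes "d \<in> darts E" "orbit \<phi> d \<inter> backtracks = {}"
  shows "face_walk d (Suc (Suc k)) \<noteq> face_walk d k"
proof
  assume walk: "face_walk d (Suc (Suc k)) = face_walk d k"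
  define e where "e = (\<phi> ^^ k) d"
  have e: "e \<in> darts E" "e \<in> orbit \<phi> d"
    using assms(1) funpow_in_orbit[OF self_in_orbit_\<phi>] by (auto simp: e_def funpow_\<phi>_in_darts)
  have "dart_tail (\<phi> e) = dart_tail (dart_rev e)"
    using dart_tail_\<phi>[OF e(1)] by (simp add: dart_head_def)
  moreover have "dart_head (\<phi> e) = face_walk d (Suc (Suc k))"
    using face_walk_Suc[OF assms(1), of "Suc k"] by (simp add: e_def)
  then have "dart_head (\<phi> e) = dart_head (dart_rev e)"
    using walk by (simp add: face_walk_def e_def)
  ultimately have "\<phi> e = dart_rev e" by (rule dart_eqI)
  then show False using e assms(2) by (auto simp: backtracks_def)
qed

lemma short_face_meets_cycle_first_darts:
  assumes d: "d \<in> darts E" and no_backtrack: "orbit \<phi> d \<inter> backtracks = {}"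
    and short: "card (orbit \<phi> d) \<le> L"
  shows "orbit \<phi> d \<inter> cycle_first_darts n1 n2 L E \<noteq> {}"
proof -
  let ?v = "face_walk d"
  have in_orbit: "(\<phi> ^^ k) d \<in> orbit \<phi> d" for k
    using funpow_in_orbit[OF self_in_orbit_\<phi>[OF d]] .
  obtain n where n: "0 < n" "(\<phi> ^^ n) d = d"
    using self_in_orbit_\<phi>[OF d] by (auto simp: orbit_altdef)
  then have period: "?v 0 = ?v (0 + n)" by (simp add: face_walk_def)
  have no_loop: "?v (Suc k) \<noteq> ?v k" for k
  proof
    assume "?v (Suc k) = ?v k"
    then have "dart_head ((\<phi> ^^ k) d) = dart_tail ((\<phi> ^^ k) d)"
      unfolding face_walk_Suc[OF d] by (simp add: face_walk_def)
    then show False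
      using opposite_sides_tail_head[of "(\<phi> ^^ k) d"] by (simp add: opposite_sides_def)
  qed
  (* The vertex walk of the face never turns back, so its first repetition closes a cycle. *)
  obtain i m where m: "3 \<le> m" "?v (i + m) = ?v i" and inj: "inj_on (\<lambda>t. ?v (i + t)) {..<m}"
    by (rule simple_cycle_in_sequence[OF n(1) period no_loop
          face_walk_no_backtrack[OF d no_backtrack]])
  define u where "u = map (\<lambda>t. ?v (i + t)) [0..<m]"
  have u_nth: "u ! t = ?v (i + t)" if "t < m" for t
    using that by (simp add: u_def)
  have u_next: "u ! ((t + 1) mod m) = dart_head ((\<phi> ^^ (i + t)) d)" if "t < m" for t
  proof (cases "t + 1 < m")
    case True
    then show ?thesis using d u_nth by (simp add: face_walk_Suc)
  next
    case False
    then have "t + 1 = m" using that by simp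
    then have "(t + 1) mod m = 0" and eq: "Suc (i + t) = i + m" by simp_all
    then show ?thesis
      unfolding face_walk_Suc[OF d, symmetric] eq using m u_nth[of 0] by simp
  qed
  have "m \<le> card (orbit \<phi> d)"
  proof -
    have "inj_on (\<lambda>t. (\<phi> ^^ (i + t)) d) {..<m}"
      using inj unfolding inj_on_def face_walk_def by metis
    moreover have "finite (orbit \<phi> d)"
      using finite_darts[OF finite_edges] finite_subset face_subset_darts d
      by (metis faces_eq_orbits imageI)
    ultimately show ?thesis
      using in_orbit by (metis (no_types, lifting) card_inj_on_le card_lessThan image_subset_iff)
  qed
  moreover have "distinct u"
    using inj by (simp add: u_def distinct_map atLeast0LessThan)
  moreover have "set u \<subseteq> bip_vertices n1 n2"
    using dart_tail_in_vertices[OF funpow_\<phi>_in_darts[OF d]] by (auto simp: u_def face_walk_def)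
  moreover have "opposite_sides (u ! t) (u ! ((t + 1) mod m))" if "t < m" for t
    using that u_nth u_next opposite_sides_tail_head by (simp add: face_walk_def)
  ultimately have "u \<in> bip_cycle_seqs n1 n2 L"
    using m(1) short by (simp add: bip_cycle_seqs_def u_def)
  moreover have "cycle_edges u \<subseteq> E"
  proof -
    have "edge_between (u ! t) (u ! ((t + 1) mod m)) \<in> E" if "t < m" for t
      using that u_nth u_next fst_in_edges[OF funpow_\<phi>_in_darts[OF d]]
      by (simp add: face_walk_def edge_between_tail_head)
    then show ?thesis by (auto simp: cycle_edges_def u_def)
  qed
  moreover have "dart_between (u ! 0) (u ! 1) = (\<phi> ^^ i) d"
    using m(1) u_nth[of 0] u_next[of 0] by (simp add: face_walk_def dart_between_tail_head)
  ultimately have "(\<phi> ^^ i) d \<in> cycle_first_darts n1 n2 L E"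
    unfolding cycle_first_darts_def by (metis (mono_tags, lifting) image_eqI mem_Collect_eq)
  then show ?thesis using in_orbit by blast
qed

lemma card_faces_le:
  assumes "1 \<le> L"
  shows "real (card (faces E \<sigma>)) \<le> faces_upper_bound n1 n2 L E"
proof -
  define FB where "FB = {F \<in> faces E \<sigma>. F \<inter> backtracks \<noteq> {}}"
  define FL where "FL = {F \<in> faces E \<sigma>. L < card F}"
  define FS where "FS = {F \<in> faces E \<sigma>. F \<inter> backtracks = {} \<and> card F \<le> L}"
  have "card (faces E \<sigma>) \<le> card FB + card FL + card FS"
  proof -
    have "faces E \<sigma> = FB \<union> FL \<union> FS"
      unfolding FB_def FL_def FS_def by auto
    then have "card (faces E \<sigma>) \<le> card (FB \<union> FL) + card FS"
      by (simp only: card_Un_le)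
    then show ?thesis using card_Un_le[of FB FL] by linarith
  qed
  moreover have "card FB \<le> card (pendant_left E) + card (pendant_right E)"
  proof -
    have "card FB \<le> card backtracks"
      using faces_disjoint finite_subset[OF _ finite_darts[OF finite_edges]]
      by (intro card_disjoint_family_le_card_hitting_set) (auto simp: FB_def backtracks_def)
    then show ?thesis using card_backtracks_le by linarith
  qed
  moreover have "real (card FL) \<le> 2 * real (card E) / real L"
  proof -
    have "card FL * L \<le> card (darts E)"
      using finite_darts[OF finite_edges] face_subset_darts faces_disjoint
      by (intro card_disjoint_family_mult_le) (auto simp: FL_def)
    then have "real (card FL) * real L \<le> 2 * real (card E)"
      unfolding card_darts[OF finite_edges] by (metis of_nat_le_iff of_nat_mult of_nat_numeral)
    then show ?thesis using assms by (simp add: pos_le_divide_eq)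
  qed
  moreover have "card FS \<le> num_cycle_seqs n1 n2 L E"
  proof -
    have "card FS \<le> card (cycle_first_darts n1 n2 L E)"
    proof (rule card_disjoint_family_le_card_hitting_set)
      show "F \<inter> cycle_first_darts n1 n2 L E \<noteq> {}" if "F \<in> FS" for F
        using that short_face_meets_cycle_first_darts
        unfolding FS_def faces_eq_orbits by blast
      show "finite (cycle_first_darts n1 n2 L E)"
        by (simp add: cycle_first_darts_def finite_bip_cycle_seqs)
    qed (use faces_disjoint in \<open>auto simp: FS_def\<close>)
    then show ?thesis using card_cycle_first_darts_le by (rule le_trans)
  qed
  ultimately show ?thesis unfolding faces_upper_bound_def by linarith
qed

end

text \<open>Some rotation system exists, so the maximum in num_faces_min_genus is attained.\<close>

definition cyclic_succ :: "'a::linorder set \<Rightarrow> 'a \<Rightarrow> 'a" where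
  "cyclic_succ S = cycle_of_list (sorted_list_of_set S)"

lemma cyclic_succ_permutes: "finite S \<Longrightarrow> cyclic_succ S permutes S"
  using cycle_permutes[of "sorted_list_of_set S"] by (simp add: cyclic_succ_def)

lemma cyclic_succ_funpow_reaches:
  "finite S \<Longrightarrow> x \<in> S \<Longrightarrow> y \<in> S \<Longrightarrow> \<exists>k. (cyclic_succ S ^^ k) x = y"
  unfolding cyclic_succ_def by (rule cycle_of_list_funpow_reaches) simp_all

fun neighbour_rotation :: "(nat \<times> nat) set \<Rightarrow> (nat \<times> nat) \<times> bool \<Rightarrow> (nat \<times> nat) \<times> bool" where
  "neighbour_rotation E ((i, j), True) = ((i, cyclic_succ {j'. (i, j') \<in> E} j), True)"
| "neighbour_rotation E ((i, j), False) = ((cyclic_succ {i'. (i', j) \<in> E} i, j), False)"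

lemma funpow_neighbour_rotation:
  "(neighbour_rotation E ^^ k) ((i, j), True)
     = ((i, (cyclic_succ {j'. (i, j') \<in> E} ^^ k) j), True)"
  "(neighbour_rotation E ^^ k) ((i, j), False)
     = (((cyclic_succ {i'. (i', j) \<in> E} ^^ k) i, j), False)"
  by (induction k) auto

lemma rotation_system_neighbour_rotation:
  assumes "finite E" shows "rotation_system E (neighbour_rotation E)"
proof -
  let ?\<rho> = "neighbour_rotation E"
  have fin: "finite {j'. (i, j') \<in> E}" "finite {i'. (i', j) \<in> E}" for i j
  proof -
    have "{j'. (i, j') \<in> E} \<subseteq> snd ` E" "{i'. (i', j) \<in> E} \<subseteq> fst ` E" by force+
    then show "finite {j'. (i, j') \<in> E}" "finite {i'. (i', j) \<in> E}"
      using finite_subset finite_imageI[OF assms] by blast+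
  qed
  note perm = cyclic_succ_permutes[OF fin(1)] cyclic_succ_permutes[OF fin(2)]
  have maps: "?\<rho> ` darts E \<subseteq> darts E"
  proof (rule image_subsetI)
    fix d assume "d \<in> darts E"
    moreover obtain i j b where d: "d = ((i, j), b)" by (metis prod.collapse)
    ultimately have "j \<in> {j'. (i, j') \<in> E}" "i \<in> {i'. (i', j) \<in> E}" by (auto simp: darts_def)
    then show "?\<rho> d \<in> darts E"
      using permutes_in_image[OF perm(1)] permutes_in_image[OF perm(2)] d
      by (cases b) (auto simp: darts_def)
  qed
  have "inj_on ?\<rho> (darts E)"
  proof (rule inj_onI)
    fix d d' assume "d \<in> darts E" "d' \<in> darts E" "?\<rho> d = ?\<rho> d'"
    then show "d = d'"
      by (cases d; cases d'; cases "snd d"; cases "snd d'")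
        (auto simp: darts_def inj_eq[OF permutes_inj[OF perm(1)]]
          inj_eq[OF permutes_inj[OF perm(2)]])
  qed
  with maps have "bij_betw ?\<rho> (darts E) (darts E)"
    using endo_inj_surj[OF finite_darts[OF assms]] by (simp add: bij_betw_def)
  moreover have "dart_tail (?\<rho> d) = dart_tail d" for d
    by (cases d; cases "snd d") auto
  moreover have "\<exists>k. (?\<rho> ^^ k) d = d'"
    if "d \<in> darts E" "d' \<in> darts E" "dart_tail d = dart_tail d'" for d d'
    using that cyclic_succ_funpow_reaches[OF fin(1)] cyclic_succ_funpow_reaches[OF fin(2)]
    by (cases d; cases d'; cases "snd d"; cases "snd d'")
      (auto simp: darts_def funpow_neighbour_rotation)
  ultimately show ?thesis by (simp add: rotation_system_def)
qed

lemma num_faces_min_genus_attained: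
  assumes "finite E"
  obtains \<sigma> where "rotation_system E \<sigma>" "num_faces_min_genus E = card (faces E \<sigma>)"
proof -
  let ?R = "{card (faces E \<sigma>) | \<sigma>. rotation_system E \<sigma>}"
  have "?R \<subseteq> {..card (darts E)}"
    using assms by (auto simp: faces_def intro!: card_image_le) (simp add: darts_def)
  then have "finite ?R" by (rule finite_subset) simp
  moreover have "?R \<noteq> {}"
    using rotation_system_neighbour_rotation[OF assms] by blast
  ultimately have "Max ?R \<in> ?R" by (rule Max_in)
  then show ?thesis using that unfolding num_faces_min_genus_def by blast
qed

lemma num_faces_min_genus_le:
  assumes "E \<subseteq> bip_edges n1 n2" "1 \<le> L"
  shows "real (num_faces_min_genus E) \<le> faces_upper_bound n1 n2 L E"
proof -
  obtain \<sigma> where \<sigma>: "rotation_system E \<sigma>" "num_faces_min_genus E = card (faces E \<sigma>)"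
    using finite_subset[OF assms(1) finite_bip_edges] by (rule num_faces_min_genus_attained)
  interpret bip_rotation n1 n2 E \<sigma>
    using assms(1) \<sigma>(1) by unfold_locales
  show ?thesis using card_faces_le[OF assms(2)] \<sigma>(2) by simp
qed

section \<open>Expectation of the face bound\<close>

lemma bip_expect_card: "bip_expect n1 n2 p (\<lambda>E. real (card E)) = real (n1 * n2) * p"
proof -
  have "bip_expect n1 n2 p (\<lambda>E. real (card E))
      = bip_expect n1 n2 p (\<lambda>E. real (card {c \<in> bip_edges n1 n2. {c} \<subseteq> E \<and> E \<inter> {} = {}}))"
    by (intro bip_expect_cong) (auto intro!: arg_cong[where f = card])
  also have "\<dots> = (\<Sum>c\<in>bip_edges n1 n2. p ^ card {c} * (1 - p) ^ card ({} :: (nat \<times> nat) set))"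
    by (rule bip_expect_count_patterns) auto
  also have "\<dots> = real (n1 * n2) * p"
    by (simp add: card_bip_edges)
  finally show ?thesis .
qed

definition other_edges_at_left :: "nat \<Rightarrow> nat \<times> nat \<Rightarrow> (nat \<times> nat) set" where
  "other_edges_at_left n2 c = (\<lambda>j. (fst c, j)) ` ({..<n2} - {snd c})"

definition other_edges_at_right :: "nat \<Rightarrow> nat \<times> nat \<Rightarrow> (nat \<times> nat) set" where
  "other_edges_at_right n1 c = (\<lambda>i. (i, snd c)) ` ({..<n1} - {fst c})"

lemma pendant_left_eq:
  assumes "E \<subseteq> bip_edges n1 n2"
  shows "pendant_left E = {c \<in> bip_edges n1 n2. {c} \<subseteq> E \<and> E \<inter> other_edges_at_left n2 c = {}}"
proof (intro set_eqI iffI)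
  fix c assume "c \<in> pendant_left E"
  then show "c \<in> {c \<in> bip_edges n1 n2. {c} \<subseteq> E \<and> E \<inter> other_edges_at_left n2 c = {}}"
    using assms unfolding pendant_left_def other_edges_at_left_def by blast
next
  fix c assume c: "c \<in> {c \<in> bip_edges n1 n2. {c} \<subseteq> E \<and> E \<inter> other_edges_at_left n2 c = {}}"
  have "j = snd c" if "(fst c, j) \<in> E" for j
  proof (rule ccontr)
    assume "j \<noteq> snd c"
    moreover have "j < n2" using that assms by (auto simp: bip_edges_def)
    ultimately have "(fst c, j) \<in> other_edges_at_left n2 c" by (simp add: other_edges_at_left_def)
    then show False using c that by blast
  qed
  then show "c \<in> pendant_left E" using c unfolding pendant_left_def by blast
qed

lemma pendant_right_eq:
  assumes "E \<subseteq> bip_edges n1 n2"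
  shows "pendant_right E = {c \<in> bip_edges n1 n2. {c} \<subseteq> E \<and> E \<inter> other_edges_at_right n1 c = {}}"
proof (intro set_eqI iffI)
  fix c assume "c \<in> pendant_right E"
  then show "c \<in> {c \<in> bip_edges n1 n2. {c} \<subseteq> E \<and> E \<inter> other_edges_at_right n1 c = {}}"
    using assms unfolding pendant_right_def other_edges_at_right_def by blast
next
  fix c assume c: "c \<in> {c \<in> bip_edges n1 n2. {c} \<subseteq> E \<and> E \<inter> other_edges_at_right n1 c = {}}"
  have "i = fst c" if "(i, snd c) \<in> E" for i
  proof (rule ccontr)
    assume "i \<noteq> fst c"
    moreover have "i < n1" using that assms by (auto simp: bip_edges_def)
    ultimately have "(i, snd c) \<in> other_edges_at_right n1 c" by (simp add: other_edges_at_right_def)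
    then show False using c that by blast
  qed
  then show "c \<in> pendant_right E" using c unfolding pendant_right_def by blast
qed

lemma bip_expect_card_pendant_left:
  "bip_expect n1 n2 p (\<lambda>E. real (card (pendant_left E)))
     = real (n1 * n2) * (p * (1 - p) ^ (n2 - 1))"
proof -
  have "bip_expect n1 n2 p (\<lambda>E. real (card (pendant_left E)))
      = bip_expect n1 n2 p
          (\<lambda>E. real (card {c \<in> bip_edges n1 n2. {c} \<subseteq> E \<and> E \<inter> other_edges_at_left n2 c = {}}))"
    by (rule bip_expect_cong) (simp add: pendant_left_eq)
  also have "\<dots> = (\<Sum>c\<in>bip_edges n1 n2. p ^ card {c} * (1 - p) ^ card (other_edges_at_left n2 c))"
    by (rule bip_expect_count_patterns) (auto simp: other_edges_at_left_def bip_edges_def)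
  also have "\<dots> = (\<Sum>c\<in>bip_edges n1 n2. p * (1 - p) ^ (n2 - 1))"
    by (intro sum.cong refl)
      (auto simp: other_edges_at_left_def card_image inj_on_def bip_edges_def)
  also have "\<dots> = real (n1 * n2) * (p * (1 - p) ^ (n2 - 1))"
    by (simp add: card_bip_edges)
  finally show ?thesis .
qed

lemma bip_expect_card_pendant_right:
  "bip_expect n1 n2 p (\<lambda>E. real (card (pendant_right E)))
     = real (n1 * n2) * (p * (1 - p) ^ (n1 - 1))"
proof -
  have "bip_expect n1 n2 p (\<lambda>E. real (card (pendant_right E)))
      = bip_expect n1 n2 p
          (\<lambda>E. real (card {c \<in> bip_edges n1 n2. {c} \<subseteq> E \<and> E \<inter> other_edges_at_right n1 c = {}}))"
    by (rule bip_expect_cong) (simp add: pendant_right_eq)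
  also have "\<dots> = (\<Sum>c\<in>bip_edges n1 n2. p ^ card {c} * (1 - p) ^ card (other_edges_at_right n1 c))"
    by (rule bip_expect_count_patterns) (auto simp: other_edges_at_right_def bip_edges_def)
  also have "\<dots> = (\<Sum>c\<in>bip_edges n1 n2. p * (1 - p) ^ (n1 - 1))"
    by (intro sum.cong refl)
      (auto simp: other_edges_at_right_def card_image inj_on_def bip_edges_def)
  also have "\<dots> = real (n1 * n2) * (p * (1 - p) ^ (n1 - 1))"
    by (simp add: card_bip_edges)
  finally show ?thesis .
qed

lemma mod_add_two_neq:
  fixes s m :: nat
  assumes "3 \<le> m" "s < m" shows "(s + 2) mod m \<noteq> s"
proof -
  consider "s + 2 < m" | "s + 2 = m" | "s + 2 = m + 1" using assms(2) by linarith
  then show ?thesis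
  proof cases
    case 3
    then have "(s + 2) mod m = 1" using assms(1) by (simp add: mod_Suc)
    then show ?thesis using 3 assms(1) by linarith
  qed (use assms in auto)
qed

lemma card_cycle_edges:
  assumes "u \<in> bip_cycle_seqs n1 n2 L" shows "card (cycle_edges u) = length u"
proof -
  let ?m = "length u" and ?next = "\<lambda>t. (t + 1) mod length u"
  have m: "3 \<le> ?m" and "distinct u" and opp: "\<And>t. t < ?m \<Longrightarrow> opposite_sides (u ! t) (u ! ?next t)"
    using assms by (auto simp: bip_cycle_seqs_def)
  have nth_eq: "u ! a = u ! b \<longleftrightarrow> a = b" if "a < ?m" "b < ?m" for a b
    using nth_eq_iff_index_eq[OF \<open>distinct u\<close> that] .
  have next_less: "?next t < ?m" for t using m by (intro mod_less_divisor) linarith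
  have "inj_on (\<lambda>t. edge_between (u ! t) (u ! ?next t)) {..<?m}"
  proof (rule inj_onI)
    fix t s assume "t \<in> {..<?m}" "s \<in> {..<?m}"
      and "edge_between (u ! t) (u ! ?next t) = edge_between (u ! s) (u ! ?next s)"
    then have "t = s \<or> (t = ?next s \<and> ?next t = s)"
      using opp edge_between_eq_iff nth_eq next_less by (metis lessThan_iff)
    moreover have "?next (?next s) \<noteq> s" if "s < ?m" for s
      using mod_add_two_neq[OF m that] by (simp add: mod_Suc_eq)
    ultimately show "t = s" using \<open>s \<in> {..<?m}\<close> by auto
  qed
  moreover have "cycle_edges u = (\<lambda>t. edge_between (u ! t) (u ! ?next t)) ` {..<?m}"
    by (auto simp: cycle_edges_def)
  ultimately show ?thesis by (simp add: card_image)
qed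

lemma cycle_edges_subset_bip_edges:
  assumes "u \<in> bip_cycle_seqs n1 n2 L" shows "cycle_edges u \<subseteq> bip_edges n1 n2"
proof -
  have "edge_between (u ! t) (u ! ((t + 1) mod length u)) \<in> bip_edges n1 n2" if "t < length u" for t
  proof (rule edge_between_in_bip_edges)
    show "opposite_sides (u ! t) (u ! ((t + 1) mod length u))"
      using assms that by (simp add: bip_cycle_seqs_def)
    have "set u \<subseteq> bip_vertices n1 n2" using assms by (simp add: bip_cycle_seqs_def)
    moreover have "(t + 1) mod length u < length u" using that by (intro mod_less_divisor) linarith
    ultimately show "u ! t \<in> bip_vertices n1 n2" "u ! ((t + 1) mod length u) \<in> bip_vertices n1 n2"
      using that by (auto dest: nth_mem)
  qed
  then show ?thesis by (auto simp: cycle_edges_def)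
qed

lemma bip_expect_num_cycle_seqs_le:
  assumes "0 \<le> p"
  shows "bip_expect n1 n2 p (\<lambda>E. real (num_cycle_seqs n1 n2 L E))
           \<le> (\<Sum>m = 3..L. (real (n1 + n2) * p) ^ m)"
proof -
  let ?C = "bip_cycle_seqs n1 n2 L" and ?W = "\<lambda>m. {u. set u \<subseteq> bip_vertices n1 n2 \<and> length u = m}"
  have "bip_expect n1 n2 p (\<lambda>E. real (num_cycle_seqs n1 n2 L E))
      = bip_expect n1 n2 p (\<lambda>E. real (card {u \<in> ?C. cycle_edges u \<subseteq> E \<and> E \<inter> {} = {}}))"
    by (simp add: num_cycle_seqs_def)
  also have "\<dots> = (\<Sum>u\<in>?C. p ^ card (cycle_edges u) * (1 - p) ^ card ({} :: (nat \<times> nat) set))"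
    by (rule bip_expect_count_patterns)
      (auto simp: finite_bip_cycle_seqs cycle_edges_subset_bip_edges)
  also have "\<dots> = (\<Sum>u\<in>?C. p ^ length u)"
    by (intro sum.cong refl) (simp add: card_cycle_edges)
  also have "\<dots> \<le> (\<Sum>u\<in>(\<Union>m\<in>{3..L}. ?W m). p ^ length u)"
    using assms finite_lists_length_eq[OF finite_bip_vertices]
    by (intro sum_mono2) (auto simp: bip_cycle_seqs_def)
  also have "\<dots> = (\<Sum>m = 3..L. \<Sum>u\<in>?W m. p ^ length u)"
    by (rule sum.UNION_disjoint) (auto simp: finite_lists_length_eq[OF finite_bip_vertices])
  also have "\<dots> = (\<Sum>m = 3..L. (real (n1 + n2) * p) ^ m)"
    by (simp add: card_lists_length_eq[OF finite_bip_vertices] card_bip_vertices power_mult_distrib)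
  finally show ?thesis .
qed

lemma bip_expect_faces_upper_bound:
  "bip_expect n1 n2 p (faces_upper_bound n1 n2 L) =
     real (n1 * n2) * p * ((1 - p) ^ (n2 - 1) + (1 - p) ^ (n1 - 1) + 2 / real L)
     + bip_expect n1 n2 p (\<lambda>E. real (num_cycle_seqs n1 n2 L E))"
  unfolding faces_upper_bound_def bip_expect_add
  using bip_expect_cmult[of n1 n2 p "2 / real L" "\<lambda>E. real (card E)"]
  by (simp add: bip_expect_card_pendant_left bip_expect_card_pendant_right bip_expect_card
      field_simps)

definition faces_bound_ratio :: "nat \<Rightarrow> nat \<Rightarrow> real \<Rightarrow> nat \<Rightarrow> real" where
  "faces_bound_ratio n1 n2 p L = (1 - p) ^ (n2 - 1) + (1 - p) ^ (n1 - 1) + 2 / real L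
     + (\<Sum>m = 3..L. (real (n1 + n2) * p) ^ m) / (p * real n1 * real n2)"

lemma faces_bound_ratio_pos:
  assumes "0 \<le> p" "p \<le> 1" "1 \<le> L" shows "0 < faces_bound_ratio n1 n2 p L"
proof -
  have "0 \<le> (\<Sum>m = 3..L. (real (n1 + n2) * p) ^ m) / (p * real n1 * real n2)"
    using assms by (intro divide_nonneg_nonneg sum_nonneg) auto
  moreover have "0 \<le> (1 - p) ^ (n2 - 1)" "0 \<le> (1 - p) ^ (n1 - 1)" "0 < 2 / real L"
    using assms by auto
  ultimately show ?thesis unfolding faces_bound_ratio_def by linarith
qed

lemma bip_expect_faces_upper_bound_le:
  assumes "0 \<le> p" "0 < p * real n1 * real n2"
  shows "bip_expect n1 n2 p (faces_upper_bound n1 n2 L)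
           \<le> p * real n1 * real n2 * faces_bound_ratio n1 n2 p L"
proof -
  define M where "M = p * real n1 * real n2"
  define S where "S = (\<Sum>m = 3..L. (real (n1 + n2) * p) ^ m)"
  define A where "A = (1 - p) ^ (n2 - 1) + (1 - p) ^ (n1 - 1) + 2 / real L"
  have "bip_expect n1 n2 p (faces_upper_bound n1 n2 L) \<le> M * A + S"
    using bip_expect_faces_upper_bound[of n1 n2 p L]
      bip_expect_num_cycle_seqs_le[OF assms(1), of n1 n2 L]
    by (simp add: M_def S_def A_def mult_ac)
  also have "\<dots> = M * (A + S / M)"
    using assms(2) by (simp add: distrib_left flip: M_def)
  finally show ?thesis by (simp add: M_def S_def A_def faces_bound_ratio_def)
qed

lemma bip_prob_num_faces_le:
  assumes p: "0 \<le> p" "p \<le> 1" and pos: "0 < p * real n1 * real n2" and L: "1 \<le> L"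
  defines "B \<equiv> faces_bound_ratio n1 n2 p L"
  shows "1 - sqrt B
    \<le> bip_prob n1 n2 p (\<lambda>E. real (num_faces_min_genus E) \<le> p * real n1 * real n2 * sqrt B)"
proof -
  define g where "g = p * real n1 * real n2 * sqrt B"
  have "0 < B" unfolding B_def using p L by (rule faces_bound_ratio_pos)
  then have "0 < g" unfolding g_def by (intro mult_pos_pos[OF pos] real_sqrt_gt_zero)
  have "bip_prob n1 n2 p (\<lambda>E. \<not> real (num_faces_min_genus E) \<le> g)
      \<le> bip_prob n1 n2 p (\<lambda>E. g \<le> faces_upper_bound n1 n2 L E)"
  proof (rule bip_prob_mono[OF p])
    fix E assume "E \<subseteq> bip_edges n1 n2" "\<not> real (num_faces_min_genus E) \<le> g"
    then show "g \<le> faces_upper_bound n1 n2 L E"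
      using num_faces_min_genus_le[OF \<open>E \<subseteq> bip_edges n1 n2\<close> L] by linarith
  qed
  also have "\<dots> \<le> bip_expect n1 n2 p (faces_upper_bound n1 n2 L) / g"
    using p \<open>0 < g\<close> by (intro bip_prob_markov) (auto simp: faces_upper_bound_def)
  also have "\<dots> \<le> p * real n1 * real n2 * B / g"
    unfolding B_def using bip_expect_faces_upper_bound_le[OF p(1) pos] \<open>0 < g\<close>
    by (intro divide_right_mono) auto
  also have "\<dots> = sqrt B"
  proof -
    have "p * real n1 * real n2 \<noteq> 0" using pos by linarith
    then show ?thesis using \<open>0 < B\<close> by (simp add: g_def real_div_sqrt)
  qed
  finally show ?thesis
    using bip_prob_compl[of n1 n2 p "\<lambda>E. real (num_faces_min_genus E) \<le> g"] by (simp add: g_def)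
qed

section \<open>Asymptotics\<close>

lemma one_minus_power_le_exp:
  fixes p :: real assumes "0 \<le> p" "p \<le> 1"
  shows "(1 - p) ^ n \<le> exp (- (p * real n))"
proof -
  have "(1 - p) ^ n \<le> exp (- p) ^ n"
    using assms exp_ge_add_one_self[of "- p"] by (intro power_mono) auto
  also have "\<dots> = exp (- (p * real n))"
    by (simp add: exp_of_nat_mult[symmetric] mult.commute)
  finally show ?thesis .
qed

lemma one_minus_power_tendsto_zero:
  fixes p :: "nat \<Rightarrow> real" and a b :: "nat \<Rightarrow> nat"
  assumes p: "\<And>k. 0 \<le> p k \<and> p k \<le> 1" and ab: "\<And>k. a k \<le> b k"
    and lim: "filterlim (\<lambda>k. p k * real (a k)) at_top sequentially"
  shows "(\<lambda>k. (1 - p k) ^ (b k - 1)) \<longlonglongrightarrow> 0"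
proof (rule tendsto_sandwich[OF _ _ tendsto_const])
  show "\<forall>\<^sub>F k in sequentially. 0 \<le> (1 - p k) ^ (b k - 1)"
    using p by (intro always_eventually allI) simp
  show "\<forall>\<^sub>F k in sequentially. (1 - p k) ^ (b k - 1) \<le> exp (- (p k * real (a k) - 1))"
  proof (intro always_eventually allI)
    fix k
    have "(1 - p k) ^ (b k - 1) \<le> (1 - p k) ^ (a k - 1)"
      using p[of k] ab[of k] by (intro power_decreasing) auto
    also have "\<dots> \<le> exp (- (p k * real (a k - 1)))"
      using p[of k] by (intro one_minus_power_le_exp) auto
    also have "\<dots> \<le> exp (- (p k * real (a k) - 1))"
      using p[of k] by (cases "a k") (auto simp: algebra_simps)
    finally show "(1 - p k) ^ (b k - 1) \<le> exp (- (p k * real (a k) - 1))" .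
  qed
  have "filterlim (\<lambda>k. p k * real (a k) - 1) at_top sequentially"
    using filterlim_tendsto_add_at_top[OF tendsto_const lim, of "- 1"] by simp
  then have "filterlim (\<lambda>k. - (p k * real (a k) - 1)) at_bot sequentially"
    by (simp only: filterlim_uminus_at_top)
  then show "(\<lambda>k. exp (- (p k * real (a k) - 1))) \<longlonglongrightarrow> 0"
    by (rule filterlim_compose[OF exp_at_bot])
qed

lemma tendsto_power_div_sqrt_zero:
  fixes N q :: "nat \<Rightarrow> real"
  assumes N: "filterlim N at_top sequentially"
    and q_small: "\<And>\<delta>. 0 < \<delta> \<Longrightarrow> \<forall>\<^sub>F k in sequentially. q k \<le> N k powr \<delta>"
    and q_nonneg: "\<forall>\<^sub>F k in sequentially. 0 \<le> q k"
  shows "(\<lambda>k. q k ^ j / sqrt (N k)) \<longlonglongrightarrow> 0"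
proof (rule tendsto_sandwich[OF _ _ tendsto_const])
  define \<delta> where "\<delta> = 1 / (4 * (real j + 1))"
  have "0 < \<delta>" "real j * \<delta> \<le> 1 / 4" by (auto simp: \<delta>_def field_simps)
  have N_ge_1: "\<forall>\<^sub>F k in sequentially. 1 \<le> N k"
    using N by (simp add: filterlim_at_top)
  show "\<forall>\<^sub>F k in sequentially. 0 \<le> q k ^ j / sqrt (N k)"
    using q_nonneg N_ge_1 by eventually_elim simp
  show "\<forall>\<^sub>F k in sequentially. q k ^ j / sqrt (N k) \<le> N k powr (- 1 / 4)"
    using q_nonneg N_ge_1 q_small[OF \<open>0 < \<delta>\<close>]
  proof eventually_elim
    case (elim k)
    have "q k ^ j \<le> (N k powr \<delta>) ^ j" using elim by (intro power_mono) auto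
    also have "\<dots> = N k powr (real j * \<delta>)" using elim by (simp add: powr_power)
    also have "\<dots> \<le> N k powr (1 / 4)"
      using \<open>real j * \<delta> \<le> 1 / 4\<close> elim by (intro powr_mono) auto
    moreover have "sqrt (N k) = N k powr (1 / 2)"
      using elim by (simp add: powr_half_sqrt)
    ultimately have "q k ^ j / sqrt (N k) \<le> N k powr (1 / 4) / N k powr (1 / 2)"
      by (simp add: divide_right_mono)
    also have "\<dots> = N k powr (- 1 / 4)"
      by (simp add: powr_diff[symmetric])
    finally show ?case .
  qed
  show "(\<lambda>k. N k powr (- 1 / 4)) \<longlonglongrightarrow> 0"
    by (rule tendsto_neg_powr[OF _ N]) simp
qed

lemma diagonal_tendsto_zero:
  fixes F :: "nat \<Rightarrow> nat \<Rightarrow> real" and c :: "nat \<Rightarrow> real"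
  assumes nonneg: "\<And>L k. 0 \<le> F L k"
    and lim: "\<And>L. (\<lambda>k. F L k) \<longlonglongrightarrow> c L" and c: "c \<longlonglongrightarrow> 0"
  obtains Lk where "(\<lambda>k. F (Lk k) k) \<longlonglongrightarrow> 0"
proof
  define Lk where "Lk k = arg_min_on (\<lambda>L. F L k) {..k}" for k
  have Lk_min: "F (Lk k) k \<le> F L k" if "L \<le> k" for L k
    unfolding Lk_def using that by (intro arg_min_least) auto
  show "(\<lambda>k. F (Lk k) k) \<longlonglongrightarrow> 0"
  proof (rule order_tendstoI)
    show "\<forall>\<^sub>F k in sequentially. a < F (Lk k) k" if "a < 0" for a
      using that nonneg by (intro always_eventually allI) (meson less_le_trans)
    show "\<forall>\<^sub>F k in sequentially. F (Lk k) k < a" if "0 < a" for a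
    proof -
      obtain L where "c L < a"
        using order_tendstoD(2)[OF c \<open>0 < a\<close>] eventually_sequentially by auto
      then have "\<forall>\<^sub>F k in sequentially. F L k < a \<and> L \<le> k"
        using order_tendstoD(2)[OF lim] eventually_ge_at_top by (intro eventually_conj) auto
      then show ?thesis
        by (rule eventually_mono) (use Lk_min in fastforce)
    qed
  qed
qed

locale sparse_bipartite_regime =
  fixes n1 n2 :: "nat \<Rightarrow> nat" and p :: "nat \<Rightarrow> real" and lam :: real
  assumes lam_bounds: "0 < lam" "lam \<le> 1"
    and n1_inf: "filterlim n1 at_top sequentially"
    and ratio: "\<And>k. real (n1 k) = lam * real (n2 k)"
    and p_range: "\<And>k. 0 \<le> p k \<and> p k \<le> 1"
    and p_lower: "filterlim (\<lambda>k. p k * sqrt (real (n1 k * n2 k))) at_top sequentially"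
    and p_upper: "\<exists>\<epsilon> :: nat \<Rightarrow> real. \<epsilon> \<longlonglongrightarrow> 0 \<and>
        (\<lambda>k. p k / (real (n1 k * n2 k)) powr (- 1 / 2 + \<epsilon> k)) \<longlonglongrightarrow> 0"
begin

abbreviation N :: "nat \<Rightarrow> real" where
  "N k \<equiv> real (n1 k * n2 k)"

lemma n1_le_n2: "n1 k \<le> n2 k"
proof -
  have "real (n1 k) \<le> real (n2 k)"
    using ratio[of k] lam_bounds mult_right_mono[of lam 1 "real (n2 k)"] by simp
  then show ?thesis by simp
qed

lemma eventually_n1_pos: "\<forall>\<^sub>F k in sequentially. 1 \<le> n1 k"
  using n1_inf by (simp add: filterlim_at_top)

lemma N_tendsto: "filterlim N at_top sequentially"
proof (rule filterlim_at_top_mono[OF filterlim_compose[OF filterlim_real_sequentially n1_inf]])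
  show "\<forall>\<^sub>F k in sequentially. real (n1 k) \<le> N k"
    using eventually_n1_pos
  proof eventually_elim
    case (elim k)
    then show ?case using n1_le_n2[of k] by simp
  qed
qed

lemma sqrt_N: "sqrt (N k) = sqrt lam * real (n2 k)"
proof -
  have "N k = lam * real (n2 k) ^ 2" using ratio[of k] by (simp add: power2_eq_square)
  then show ?thesis by (simp add: real_sqrt_mult)
qed

lemma p_n1_tendsto: "filterlim (\<lambda>k. p k * real (n1 k)) at_top sequentially"
proof -
  have eq: "sqrt lam * (p k * sqrt (N k)) = p k * real (n1 k)" for k
  proof -
    have "sqrt lam * (p k * sqrt (N k)) = p k * (sqrt lam * sqrt lam) * real (n2 k)"
      by (simp only: sqrt_N mult_ac)
    also have "\<dots> = p k * real (n1 k)" using lam_bounds ratio[of k] by simp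
    finally show ?thesis .
  qed
  have "filterlim (\<lambda>k. sqrt lam * (p k * sqrt (N k))) at_top sequentially"
    using lam_bounds by (intro filterlim_tendsto_pos_mult_at_top[OF tendsto_const _ p_lower]) simp
  then show ?thesis by (simp only: eq)
qed

lemma eventually_density_pos: "\<forall>\<^sub>F k in sequentially. 0 < p k * real (n1 k) * real (n2 k)"
proof -
  have "\<forall>\<^sub>F k in sequentially. 0 < p k * sqrt (N k)"
    using p_lower by (simp add: filterlim_at_top_dense)
  then show ?thesis
  proof eventually_elim
    case (elim k)
    then have "0 < p k" "0 < N k"
      using p_range[of k] by (auto simp: zero_less_mult_iff)
    then show ?case by (simp add: mult.assoc)
  qed
qed

lemma eventually_p_sqrt_N_le_powr:
  assumes "0 < \<delta>" shows "\<forall>\<^sub>F k in sequentially. p k * sqrt (N k) \<le> N k powr \<delta>"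
proof -
  obtain \<epsilon> :: "nat \<Rightarrow> real" where \<epsilon>: "\<epsilon> \<longlonglongrightarrow> 0"
    and lim: "(\<lambda>k. p k / N k powr (- 1 / 2 + \<epsilon> k)) \<longlonglongrightarrow> 0"
    using p_upper by blast
  have "\<forall>\<^sub>F k in sequentially. 1 \<le> N k"
    using N_tendsto by (simp add: filterlim_at_top)
  with order_tendstoD(2)[OF \<epsilon> assms] order_tendstoD(2)[OF lim zero_less_one]
  show ?thesis
  proof eventually_elim
    case (elim k)
    have "0 < N k powr (- 1 / 2 + \<epsilon> k)"
      using elim(3) by (intro powr_gt_zero[THEN iffD2]) linarith
    with elim have "p k < 1 * N k powr (- 1 / 2 + \<epsilon> k)"
      by (simp only: pos_divide_less_eq)
    then have "p k \<le> N k powr (- 1 / 2 + \<epsilon> k)" by simp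
    also have "\<dots> \<le> N k powr (- 1 / 2 + \<delta>)"
      using elim by (intro powr_mono) auto
    finally have "p k * N k powr (1 / 2) \<le> N k powr (- 1 / 2 + \<delta>) * N k powr (1 / 2)"
      by (intro mult_right_mono) auto
    also have "\<dots> = N k powr \<delta>"
      by (simp add: powr_add[symmetric])
    finally show ?case
      using elim by (simp add: powr_half_sqrt)
  qed
qed

lemma cycle_term_tendsto_zero:
  assumes "1 \<le> m"
  shows "(\<lambda>k. (real (n1 k + n2 k) * p k) ^ m / (p k * real (n1 k) * real (n2 k))) \<longlonglongrightarrow> 0"
proof -
  (* The m-th term is c ^ m * q ^ (m - 1) / sqrt N, because n1 + n2 = c * sqrt N. *)
  define q where "q k = p k * sqrt (N k)" for k
  define c where "c = (1 + lam) / sqrt lam"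
  have q_pos: "\<forall>\<^sub>F k in sequentially. 0 < q k"
    using p_lower by (simp add: filterlim_at_top_dense q_def)
  have "(\<lambda>k. c ^ m * (q k ^ (m - 1) / sqrt (N k))) \<longlonglongrightarrow> c ^ m * 0"
    using q_pos eventually_p_sqrt_N_le_powr
    by (intro tendsto_mult tendsto_const tendsto_power_div_sqrt_zero[OF N_tendsto])
      (auto simp: q_def elim: eventually_mono)
  moreover have "\<forall>\<^sub>F k in sequentially.
      c ^ m * (q k ^ (m - 1) / sqrt (N k))
        = (real (n1 k + n2 k) * p k) ^ m / (p k * real (n1 k) * real (n2 k))"
    using q_pos
  proof eventually_elim
    case (elim k)
    have "c * q k = (1 + lam) / sqrt lam * (p k * (sqrt lam * real (n2 k)))"
      unfolding c_def q_def sqrt_N ..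
    also have "\<dots> = real (n1 k + n2 k) * p k"
      using lam_bounds ratio[of k] by (simp add: field_simps)
    finally have "real (n1 k + n2 k) * p k = c * q k" ..
    moreover have "p k * real (n1 k) * real (n2 k) = q k * sqrt (N k)"
      by (simp add: q_def mult.assoc abs_mult)
    moreover have "q k ^ m = q k * q k ^ (m - 1)"
      using assms by (simp add: power_eq_if)
    ultimately show ?case
      using elim by (simp add: power_mult_distrib)
  qed
  ultimately show ?thesis by (simp add: tendsto_cong)
qed

lemma faces_bound_ratio_tendsto:
  "(\<lambda>k. faces_bound_ratio (n1 k) (n2 k) (p k) L) \<longlonglongrightarrow> 0 + 0 + 2 / real L + 0"
  unfolding faces_bound_ratio_def sum_divide_distrib
proof (intro tendsto_add tendsto_const)
  show "(\<lambda>k. (1 - p k) ^ (n2 k - 1)) \<longlonglongrightarrow> 0"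
    using p_range n1_le_n2 p_n1_tendsto by (rule one_minus_power_tendsto_zero)
  show "(\<lambda>k. (1 - p k) ^ (n1 k - 1)) \<longlonglongrightarrow> 0"
    using p_range order_refl p_n1_tendsto by (rule one_minus_power_tendsto_zero)
  show "(\<lambda>k. \<Sum>m = 3..L. (real (n1 k + n2 k) * p k) ^ m / (p k * real (n1 k) * real (n2 k)))
      \<longlonglongrightarrow> 0"
    using tendsto_sum[of "{3..L}", OF cycle_term_tendsto_zero] by simp
qed

lemma slowly_growing_cycle_bound:
  obtains L where "\<And>k. 1 \<le> L k" "(\<lambda>k. faces_bound_ratio (n1 k) (n2 k) (p k) (L k)) \<longlonglongrightarrow> 0"
proof -
  obtain L where "(\<lambda>k. faces_bound_ratio (n1 k) (n2 k) (p k) (Suc (L k))) \<longlonglongrightarrow> 0"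
  proof (rule diagonal_tendsto_zero
      [where F = "\<lambda>L k. faces_bound_ratio (n1 k) (n2 k) (p k) (Suc L)"])
    show "0 \<le> faces_bound_ratio (n1 k) (n2 k) (p k) (Suc L)" for L k
      using faces_bound_ratio_pos[of "p k" "Suc L" "n1 k" "n2 k"] p_range[of k] by simp
    show "(\<lambda>k. faces_bound_ratio (n1 k) (n2 k) (p k) (Suc L)) \<longlonglongrightarrow> 2 / real (Suc L)" for L
      using faces_bound_ratio_tendsto[of "Suc L"] by simp
    show "(\<lambda>L. 2 / real (Suc L)) \<longlonglongrightarrow> 0"
      by (rule real_tendsto_divide_at_top[OF tendsto_const])
        (rule filterlim_compose[OF filterlim_real_sequentially filterlim_Suc])
  qed
  then show ?thesis using that[of "\<lambda>k. Suc (L k)"] by simp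
qed

end

theorem corollary4p10:
  fixes n1 n2 :: "nat \<Rightarrow> nat" and p :: "nat \<Rightarrow> real" and lam :: real
  assumes lam_bounds: "0 < lam" "lam \<le> 1"
    and n1_inf: "filterlim n1 at_top sequentially"
    and ratio: "\<And>k. real (n1 k) = lam * real (n2 k)"
    and p_range: "\<And>k. 0 \<le> p k \<and> p k \<le> 1"
    and p_lower: "filterlim (\<lambda>k. p k * sqrt (real (n1 k * n2 k))) at_top sequentially"
    and p_upper: "\<exists>\<epsilon> :: nat \<Rightarrow> real. \<epsilon> \<longlonglongrightarrow> 0 \<and>
        (\<lambda>k. p k / (real (n1 k * n2 k)) powr (- 1 / 2 + \<epsilon> k)) \<longlonglongrightarrow> 0"
  shows "\<exists>g :: nat \<Rightarrow> real.
           (\<lambda>k. g k / (p k * real (n1 k) * real (n2 k))) \<longlonglongrightarrow> 0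
         \<and> (\<lambda>k. bip_prob (n1 k) (n2 k) (p k)
                 (\<lambda>E. real (num_faces_min_genus E) \<le> g k)) \<longlonglongrightarrow> 1"
proof -
  interpret sparse_bipartite_regime n1 n2 p lam
    using assms by unfold_locales
  obtain L where L: "\<And>k. 1 \<le> L k"
    and B0: "(\<lambda>k. faces_bound_ratio (n1 k) (n2 k) (p k) (L k)) \<longlonglongrightarrow> 0"
    using slowly_growing_cycle_bound by blast
  define B where "B k = faces_bound_ratio (n1 k) (n2 k) (p k) (L k)" for k
  have sqrt_B: "(\<lambda>k. sqrt (B k)) \<longlonglongrightarrow> 0"
    using tendsto_real_sqrt[OF B0] by (simp add: B_def)
  define g where "g k = p k * real (n1 k) * real (n2 k) * sqrt (B k)" for k
  have "\<forall>\<^sub>F k in sequentially. sqrt (B k) = g k / (p k * real (n1 k) * real (n2 k))"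
    using eventually_density_pos
  proof eventually_elim
    case (elim k)
    then have "p k * real (n1 k) * real (n2 k) \<noteq> 0" by linarith
    then show ?case unfolding g_def by (rule nonzero_mult_div_cancel_left[symmetric])
  qed
  with sqrt_B have "(\<lambda>k. g k / (p k * real (n1 k) * real (n2 k))) \<longlonglongrightarrow> 0"
    by (rule Lim_transform_eventually)
  moreover have "(\<lambda>k. bip_prob (n1 k) (n2 k) (p k) (\<lambda>E. real (num_faces_min_genus E) \<le> g k)) \<longlonglongrightarrow> 1"
  proof (rule tendsto_sandwich[OF _ _ _ tendsto_const])
    show "\<forall>\<^sub>F k in sequentially.
        1 - sqrt (B k) \<le> bip_prob (n1 k) (n2 k) (p k) (\<lambda>E. real (num_faces_min_genus E) \<le> g k)"
      using eventually_density_pos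
      by eventually_elim (use p_range L in \<open>auto simp: B_def g_def intro!: bip_prob_num_faces_le\<close>)
    show "\<forall>\<^sub>F k in sequentially.
        bip_prob (n1 k) (n2 k) (p k) (\<lambda>E. real (num_faces_min_genus E) \<le> g k) \<le> 1"
      using p_range by (intro always_eventually allI bip_prob_le_1) auto
    show "(\<lambda>k. 1 - sqrt (B k)) \<longlonglongrightarrow> 1"
      using tendsto_diff[OF tendsto_const sqrt_B, of 1] by simp
  qed
  ultimately show ?thesis by blast
qed

end
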